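(* For any continuous function $f:\mathrm{SO}(2)\to\mathbb{R}$, there exists a rotation $R\in\mathrm{SO}(2)$ such that the rotation of angle $f(R)$ differs from $R$ by a rotation of angle $\pi$, i.e. $\rho(f(R))R^{-1}=\rho(\pi)$.
   Context: For $\theta\in\mathbb{R}$, $\rho(\theta)=\begin{bmatrix}\cos\theta&-\sin\theta\\ \sin\theta&\cos\theta\end{bmatrix}\in\mathrm{SO}(2)$ denotes the rotation of angle $\theta$. *)

theory Defs
  imports "HOL-Analysis.Analysis"
begin

definition SO2 :: "(real^2^2) set" where
  "SO2 = {A. orthogonal_matrix A \<and> det A = 1}"

definition rho :: "real \<Rightarrow> real^2^2" where
  "rho \<theta> = vector [vector [cos \<theta>, - sin \<theta>], vector [sin \<theta>, cos \<theta>]]"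

end

theory Submission
  imports Defs
begin

text \<open>Parametrise rotations by \<open>t \<in> [0, 2\<pi>]\<close> and lift \<open>f\<close> to the real function
  \<open>g t = f (\<rho> t) - t\<close>. Since \<open>\<rho>\<close> is \<open>2\<pi>\<close>-periodic, \<open>g\<close> drops by exactly \<open>2\<pi>\<close> over
  \<open>[0, 2\<pi>]\<close>, so by the intermediate value theorem it takes some value \<open>\<pi> + 2k\<pi>\<close>.
  At such a \<open>t\<close>, with \<open>R = \<rho> t\<close>, we get \<open>\<rho> (f R) R\<^sup>-\<^sup>1 = \<rho> (g t) = \<rho> \<pi>\<close>.\<close>

lemma matrix_inv_unique:
  fixes A :: "'a::semiring_1^'n^'m" and B :: "'a^'m^'n"
  assumes "A ** B = mat 1" and "B ** A = mat 1"
  shows "matrix_inv A = B"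
proof -
  have inv: "A ** matrix_inv A = mat 1 \<and> matrix_inv A ** A = mat 1"
    unfolding matrix_inv_def by (rule someI[of _ B]) (use assms in blast)
  have "matrix_inv A = (B ** A) ** matrix_inv A"
    using assms(2) by simp
  also have "\<dots> = B"
    using inv by (simp add: matrix_mul_assoc[symmetric])
  finally show ?thesis .
qed

lemma IVT_modulo_period:
  fixes g :: "real \<Rightarrow> real"
  assumes "continuous_on {a..b} g" and "a \<le> b" and "p > 0" and "g b \<le> g a - p"
  shows "\<exists>t\<in>{a..b}. \<exists>k::int. g t = c + p * of_int k"
proof -
  define k where "k = \<lceil>(g b - c) / p\<rceil>"
  have "(g b - c) / p \<le> of_int k" and "of_int k < (g b - c) / p + 1"
    unfolding k_def by linarith+
  with \<open>p > 0\<close> have "g b \<le> c + p * of_int k" and "c + p * of_int k < g b + p"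
    by (simp_all add: field_simps)
  then obtain t where "a \<le> t" "t \<le> b" "g t = c + p * of_int k"
    using IVT2'[of g b "c + p * of_int k" a] assms by auto
  then show ?thesis by auto
qed

lemma rho_nth [simp]:
  "rho t $ 1 $ 1 = cos t" "rho t $ 1 $ 2 = - sin t"
  "rho t $ 2 $ 1 = sin t" "rho t $ 2 $ 2 = cos t"
  by (simp_all add: rho_def)

lemma rho_zero: "rho 0 = mat 1"
  by (simp add: vec_eq_iff forall_2 mat_def)

lemma rho_add: "rho (a + b) = rho a ** rho b"
  by (simp add: vec_eq_iff forall_2 matrix_matrix_mult_def sum_2 cos_add sin_add)

lemma rho_periodic: "rho (t + 2 * pi * of_int k) = rho t"
proof -
  have "rho (2 * pi * of_int k) = mat 1"
    by (simp add: vec_eq_iff forall_2 mat_def)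
  then show ?thesis
    by (simp add: rho_add)
qed

lemma rho_in_SO2: "rho t \<in> SO2"
  unfolding SO2_def orthogonal_matrix_def
  by (simp add: vec_eq_iff forall_2 matrix_matrix_mult_def sum_2 transpose_def mat_def det_2
      power2_eq_square[symmetric])

lemma matrix_inv_rho: "matrix_inv (rho t) = rho (- t)"
  by (rule matrix_inv_unique) (simp_all flip: rho_add add: rho_zero)

lemma rho_eq_scaleR: "rho t = cos t *\<^sub>R mat 1 + sin t *\<^sub>R rho (pi / 2)"
  by (simp add: vec_eq_iff forall_2 mat_def)

lemma continuous_on_rho: "continuous_on S rho"
proof -
  have "rho = (\<lambda>t. cos t *\<^sub>R mat 1 + sin t *\<^sub>R rho (pi / 2))"
    using rho_eq_scaleR by blast
  \<comment> \<open>\<open>subst\<close>, not \<open>simp\<close>: the right-hand side mentions \<open>rho\<close> again\<close>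
  then show ?thesis
    by (subst \<open>rho = _\<close>) (intro continuous_intros)
qed

theorem theorem3:
  fixes f :: "real^2^2 \<Rightarrow> real"
  assumes "continuous_on SO2 f"
  shows "\<exists>R\<in>SO2. rho (f R) ** matrix_inv R = rho pi"
proof -
  define g where "g t = f (rho t) - t" for t
  have "continuous_on {0..2 * pi} (\<lambda>t. f (rho t))"
    by (rule continuous_on_compose2[OF assms continuous_on_rho]) (use rho_in_SO2 in blast)
  then have "continuous_on {0..2 * pi} g"
    unfolding g_def by (intro continuous_intros)
  moreover have "g (2 * pi) = g 0 - 2 * pi"
    using rho_periodic[of 0 1] by (simp add: g_def)
  ultimately obtain t and k :: int where "g t = pi + 2 * pi * of_int k"
    using IVT_modulo_period[of 0 "2 * pi" g "2 * pi" pi] by auto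
  have "rho (f (rho t)) ** matrix_inv (rho t) = rho (g t)"
    by (simp add: g_def matrix_inv_rho flip: rho_add)
  also have "\<dots> = rho pi"
    using \<open>g t = pi + 2 * pi * of_int k\<close> by (simp add: rho_periodic)
  finally have "rho (f (rho t)) ** matrix_inv (rho t) = rho pi" .
  then show ?thesis
    using rho_in_SO2 by blast
qed

end
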